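(* Let $G$ be a graph and $k \ge \gamma(G)$ an integer. If $D_{k+1}(G)$ is connected, then $X_k(G)$ is connected.
   Context: All graphs are finite and simple. A set $S \subseteq V(G)$ is a dominating set of $G$ if every vertex of $V(G)\setminus S$ is adjacent to a vertex of $S$. $\gamma(G)$ is the minimum cardinality of a dominating set of $G$. For an integer $k \ge \gamma(G)$, the $k$-dominating graph $D_k(G)$ is the graph whose vertices are the dominating sets of $G$ of cardinality at most $k$, with two such sets $A,B$ adjacent if and only if their symmetric difference $(A\setminus B)\cup(B\setminus A)$ consists of exactly one vertex of $G$. $X_k(G)$ is the graph whose vertices are the dominating sets of $G$ of cardinality exactly $k$, with two such sets $S,T$ adjacent if and only if there exist $s \in S$ and $t \in T$ with $T = (S\setminus\{s\})\cup\{t\}$ (and $S \neq T$). *)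

theory Defs
  imports Main
begin

definition simple_graph :: "'a set \<Rightarrow> ('a \<Rightarrow> 'a \<Rightarrow> bool) \<Rightarrow> bool" where
  "simple_graph V E \<longleftrightarrow> finite V \<and> (\<forall>x y. E x y \<longrightarrow> x \<in> V \<and> y \<in> V)
     \<and> (\<forall>x y. E x y \<longrightarrow> E y x) \<and> (\<forall>x. \<not> E x x)"

definition dominating :: "'a set \<Rightarrow> ('a \<Rightarrow> 'a \<Rightarrow> bool) \<Rightarrow> 'a set \<Rightarrow> bool" where
  "dominating V E S \<longleftrightarrow> S \<subseteq> V \<and> (\<forall>v \<in> V - S. \<exists>u \<in> S. E v u)"

definition domination_number :: "'a set \<Rightarrow> ('a \<Rightarrow> 'a \<Rightarrow> bool) \<Rightarrow> nat" where
  "domination_number V E = Min {card S | S. dominating V E S}"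

definition connected_graph :: "'b set \<Rightarrow> ('b \<Rightarrow> 'b \<Rightarrow> bool) \<Rightarrow> bool" where
  "connected_graph N R \<longleftrightarrow>
     (\<forall>A \<in> N. \<forall>B \<in> N. (\<lambda>x y. x \<in> N \<and> y \<in> N \<and> R x y)\<^sup>*\<^sup>* A B)"

definition D_verts :: "'a set \<Rightarrow> ('a \<Rightarrow> 'a \<Rightarrow> bool) \<Rightarrow> nat \<Rightarrow> 'a set set" where
  "D_verts V E k = {S. dominating V E S \<and> card S \<le> k}"

definition D_adj :: "'a set \<Rightarrow> 'a set \<Rightarrow> bool" where
  "D_adj A B \<longleftrightarrow> card ((A - B) \<union> (B - A)) = 1"

definition X_verts :: "'a set \<Rightarrow> ('a \<Rightarrow> 'a \<Rightarrow> bool) \<Rightarrow> nat \<Rightarrow> 'a set set" where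
  "X_verts V E k = {S. dominating V E S \<and> card S = k}"

definition X_adj :: "'a set \<Rightarrow> 'a set \<Rightarrow> bool" where
  "X_adj S T \<longleftrightarrow> S \<noteq> T \<and> (\<exists>s \<in> S. \<exists>t \<in> T. T = (S - {s}) \<union> {t})"

end

theory Submission
  imports Defs
begin

(* To every dominating set A with |A| <= k+1 attach its set of k-representatives:
   the dominating k-sets containing A when |A| <= k, and the k-subsets of A that
   still dominate when |A| = k+1.
   (1) The representatives of a fixed A span a connected part of X_k(G): supersets
       of a common dominating set are joined by single exchanges, and two k-subsets
       of a (k+1)-set differ by one exchange.
   (2) Two sets adjacent in D_{k+1}(G) have the form A and A + z and share a
       representative.
   (3) Walking along a path of D_{k+1}(G) and chaining (1) and (2) joins every
       representative of its start to every representative of its end.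
   A k-dominating set represents itself, so the connectivity of D_{k+1}(G) gives
   that of X_k(G). *)

definition X_path :: "'a set \<Rightarrow> ('a \<Rightarrow> 'a \<Rightarrow> bool) \<Rightarrow> nat \<Rightarrow> 'a set \<Rightarrow> 'a set \<Rightarrow> bool" where
  "X_path V E k = (\<lambda>S T. S \<in> X_verts V E k \<and> T \<in> X_verts V E k \<and> X_adj S T)\<^sup>*\<^sup>*"

definition representatives :: "'a set \<Rightarrow> ('a \<Rightarrow> 'a \<Rightarrow> bool) \<Rightarrow> nat \<Rightarrow> 'a set \<Rightarrow> 'a set set" where
  "representatives V E k A =
     {B \<in> X_verts V E k. if card A \<le> k then A \<subseteq> B else B \<subseteq> A}"

lemma X_path_step:
  assumes "S \<in> X_verts V E k" "T \<in> X_verts V E k" "X_adj S T" "X_path V E k T U"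
  shows "X_path V E k S U"
  using assms unfolding X_path_def by (simp add: converse_rtranclp_into_rtranclp)

lemma X_path_trans: "X_path V E k S T \<Longrightarrow> X_path V E k T U \<Longrightarrow> X_path V E k S U"
  unfolding X_path_def by (rule rtranclp_trans)

lemma dominating_superset:
  "dominating V E A \<Longrightarrow> A \<subseteq> B \<Longrightarrow> B \<subseteq> V \<Longrightarrow> dominating V E B"
  unfolding dominating_def by blast

lemma X_verts_finite: "finite V \<Longrightarrow> S \<in> X_verts V E k \<Longrightarrow> finite S"
  unfolding X_verts_def dominating_def by (auto intro: finite_subset)

text \<open>Two k-sets containing a common dominating set A are joined in X_k(G):
  exchange an element of B - B' for one of B' - B; the result still contains A,
  hence dominates, and is one step closer to B'.\<close>
lemma X_path_supersets:
  assumes "finite V" "dominating V E A"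
    and "A \<subseteq> B" "A \<subseteq> B'" "B \<in> X_verts V E k" "B' \<in> X_verts V E k"
  shows "X_path V E k B B'"
  using assms(3,5)
proof (induction "card (B - B')" arbitrary: B)
  case 0
  have fin: "finite B" "finite B'"
    using 0 assms X_verts_finite by blast+
  from 0 have "B \<subseteq> B'" "card B = card B'"
    using fin assms(6) unfolding X_verts_def by auto
  then have "B = B'" using fin card_subset_eq by blast
  then show ?case unfolding X_path_def by simp
next
  case (Suc n)
  have fin: "finite B" "finite B'"
    using Suc.prems assms X_verts_finite by blast+
  have cards: "card B = k" "card B' = k" using Suc.prems assms(6) unfolding X_verts_def by auto
  obtain x where x: "x \<in> B" "x \<notin> B'"
    using Suc.hyps(2) by (metis Diff_iff card.empty ex_in_conv nat.simps(3))
  have "\<not> B' \<subseteq> B" using fin cards x card_subset_eq by metis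
  then obtain y where y: "y \<in> B'" "y \<notin> B" by blast
  define B1 where "B1 = insert y (B - {x})"
  have "x \<notin> A" using x assms(4) by blast
  then have AB1: "A \<subseteq> B1" unfolding B1_def using Suc.prems by blast
  have "B1 \<subseteq> V" unfolding B1_def using Suc.prems assms(6) y
    unfolding X_verts_def dominating_def by auto
  moreover have "card B1 = k" unfolding B1_def using fin x y cards
    by (simp add: card_Diff_singleton) (metis One_nat_def Suc_pred card_gt_0_iff emptyE)
  ultimately have B1X: "B1 \<in> X_verts V E k"
    using dominating_superset[OF assms(2) AB1] unfolding X_verts_def by simp
  have "B1 - B' = (B - B') - {x}" unfolding B1_def using y by auto
  then have "n = card (B1 - B')" using Suc.hyps(2) x fin by (simp add: card_Diff_singleton)
  then have "X_path V E k B1 B'" using Suc.hyps(1) AB1 B1X by blast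
  moreover have "X_adj B B1" unfolding X_adj_def B1_def using x y by auto
  ultimately show ?case using X_path_step Suc.prems B1X by blast
qed

text \<open>Two distinct k-subsets of a (k+1)-set are A - {x} and A - {y}, hence one exchange apart.\<close>
lemma X_adj_subsets_of_card_Suc:
  assumes "finite A" "card A = Suc k" "S \<subseteq> A" "T \<subseteq> A" "card S = k" "card T = k" "S \<noteq> T"
  shows "X_adj S T"
proof -
  have "card (A - S) = 1" "card (A - T) = 1"
    using assms by (simp_all add: card_Diff_subset finite_subset)
  then obtain x y where "A - S = {x}" "A - T = {y}" by (meson card_1_singletonE)
  then have S: "S = A - {x}" and T: "T = A - {y}" and "x \<in> A" "y \<in> A"
    using assms(3,4) by blast+
  with \<open>S \<noteq> T\<close> have "y \<in> S" "x \<in> T" "T = S - {y} \<union> {x}" by auto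
  then show ?thesis unfolding X_adj_def using \<open>S \<noteq> T\<close> by blast
qed

lemma representatives_connected:
  assumes "finite V" "A \<in> D_verts V E (Suc k)"
    and "S \<in> representatives V E k A" "T \<in> representatives V E k A"
  shows "X_path V E k S T"
proof (cases "card A \<le> k")
  case True
  then show ?thesis
    using X_path_supersets[OF assms(1)] assms unfolding representatives_def D_verts_def by auto
next
  case False
  then have cA: "card A = Suc k" using assms(2) unfolding D_verts_def by auto
  then have "finite A" using card.infinite by fastforce
  have ST: "S \<subseteq> A" "T \<subseteq> A" "S \<in> X_verts V E k" "T \<in> X_verts V E k"
    using assms(3,4) False unfolding representatives_def by auto
  show ?thesis
  proof (cases "S = T")
    case False
    then have "X_adj S T"
      using X_adj_subsets_of_card_Suc[OF \<open>finite A\<close> cA] ST unfolding X_verts_def by auto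
    then show ?thesis using ST unfolding X_path_def by auto
  qed (simp add: X_path_def)
qed

lemma exists_superset_card:
  assumes "finite V" "A \<subseteq> V" "card A \<le> k" "k \<le> card V"
  obtains B where "A \<subseteq> B" "B \<subseteq> V" "card B = k"
proof -
  have "finite A" using assms finite_subset by blast
  then have "k - card A \<le> card (V - A)" using assms by (simp add: card_Diff_subset)
  then obtain P where P: "P \<subseteq> V - A" "card P = k - card A" by (meson obtain_subset_with_card_n)
  then have "finite P" using assms(1) finite_subset by blast
  then have "card (A \<union> P) = k"
    using card_Un_disjoint[OF \<open>finite A\<close>] P assms(3) by fastforce
  then show ?thesis using that[of "A \<union> P"] P assms(2) by blast
qed

lemma D_adj_insert:
  assumes "D_adj A B"
  obtains z where "z \<notin> A" "B = insert z A" | z where "z \<notin> B" "A = insert z B"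
proof -
  obtain z where "(A - B) \<union> (B - A) = {z}"
    using assms unfolding D_adj_def by (meson card_1_singletonE)
  then have mem: "(x \<in> A \<and> x \<notin> B \<or> x \<in> B \<and> x \<notin> A) = (x = z)" for x
    by (simp add: set_eq_iff)
  show ?thesis
  proof (cases "z \<in> A")
    case True
    then have "z \<notin> B" using mem[of z] by simp
    moreover have "A = insert z B" using mem \<open>z \<notin> B\<close> by fast
    ultimately show ?thesis using that(2) by simp
  next
    case False
    then have "B = insert z A" using mem by fast
    with False show ?thesis using that(1) by simp
  qed
qed

text \<open>Step (2) for the pair A, A + x: if A + x is small, a common k-superset of A + x
  represents both; otherwise |A| = k and A itself represents both.\<close>
lemma representatives_insert_common:
  assumes "finite V" "k \<le> card V" "x \<notin> A"
    and "A \<in> D_verts V E (Suc k)" "insert x A \<in> D_verts V E (Suc k)"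
  obtains W where "W \<in> representatives V E k A" "W \<in> representatives V E k (insert x A)"
proof -
  have dom: "dominating V E (insert x A)" "card (insert x A) \<le> Suc k" "dominating V E A"
    using assms(4,5) unfolding D_verts_def by simp_all
  then have AV: "insert x A \<subseteq> V" unfolding dominating_def by blast
  have "finite A" using finite_subset[OF AV assms(1)] by simp
  then have card_ins: "card (insert x A) = Suc (card A)" using assms(3) by simp
  show ?thesis
  proof (cases "card (insert x A) \<le> k")
    case True
    obtain B where B: "insert x A \<subseteq> B" "B \<subseteq> V" "card B = k"
      using exists_superset_card[OF assms(1) AV True assms(2)] by blast
    then have BX: "B \<in> X_verts V E k"
      using dominating_superset[OF dom(1)] unfolding X_verts_def by simp
    have "card A \<le> k" using True card_ins by simp
    then have "B \<in> representatives V E k A" "B \<in> representatives V E k (insert x A)"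
      using BX True B(1) unfolding representatives_def by auto
    then show ?thesis by (rule that)
  next
    case False
    then have "card A = k" using dom(2) card_ins by simp
    then have "A \<in> X_verts V E k" using dom(3) unfolding X_verts_def by simp
    then have "A \<in> representatives V E k A" "A \<in> representatives V E k (insert x A)"
      using False \<open>card A = k\<close> unfolding representatives_def by auto
    then show ?thesis by (rule that)
  qed
qed

lemma D_adj_common_representative:
  assumes "finite V" "k \<le> card V"
    and "A \<in> D_verts V E (Suc k)" "B \<in> D_verts V E (Suc k)" "D_adj A B"
  obtains W where "W \<in> representatives V E k A" "W \<in> representatives V E k B"
  using assms(5)
proof (cases rule: D_adj_insert)
  case (1 z)
  obtain W where "W \<in> representatives V E k A" "W \<in> representatives V E k (insert z A)"
    using representatives_insert_common[OF assms(1,2) \<open>z \<notin> A\<close> assms(3)] assms(4) 1(2)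
    by blast
  then show ?thesis using that 1(2) by simp
next
  case (2 z)
  obtain W where "W \<in> representatives V E k B" "W \<in> representatives V E k (insert z B)"
    using representatives_insert_common[OF assms(1,2) \<open>z \<notin> B\<close> assms(4)] assms(3) 2(2)
    by blast
  then show ?thesis using that 2(2) by simp
qed

lemma representatives_along_D_path:
  assumes "finite V" "k \<le> card V"
    and path: "(\<lambda>A B. A \<in> D_verts V E (Suc k) \<and> B \<in> D_verts V E (Suc k) \<and> D_adj A B)\<^sup>*\<^sup>* A B"
    and "A \<in> D_verts V E (Suc k)"
  shows "\<forall>S \<in> representatives V E k A. \<forall>T \<in> representatives V E k B. X_path V E k S T"
  using path
proof (induction rule: rtranclp_induct)
  case base
  then show ?case using representatives_connected[OF assms(1,4)] by blast
next
  case (step B C)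
  show ?case
  proof (intro ballI)
    fix S T assume S: "S \<in> representatives V E k A" and T: "T \<in> representatives V E k C"
    obtain W where W: "W \<in> representatives V E k B" "W \<in> representatives V E k C"
      using D_adj_common_representative[OF assms(1,2)] step.hyps(2) by blast
    have "X_path V E k S W" using step.IH S W(1) by blast
    moreover have "X_path V E k W T"
      using representatives_connected[OF assms(1)] step.hyps(2) W(2) T by blast
    ultimately show "X_path V E k S T" by (rule X_path_trans)
  qed
qed

text \<open>Main theorem.\<close>
theorem theorem12:
  fixes V :: "'a set" and E :: "'a \<Rightarrow> 'a \<Rightarrow> bool" and k :: nat
  assumes "simple_graph V E"
    and "k \<ge> domination_number V E"
    and "connected_graph (D_verts V E (k + 1)) D_adj"
  shows "connected_graph (X_verts V E k) X_adj"
  unfolding connected_graph_def X_path_def[symmetric]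
proof (intro ballI)
  fix S T assume S: "S \<in> X_verts V E k" and T: "T \<in> X_verts V E k"
  have "finite V" using assms(1) unfolding simple_graph_def by simp
  moreover have "k \<le> card V"
    using S card_mono[OF \<open>finite V\<close>] unfolding X_verts_def dominating_def by auto
  moreover have SD: "S \<in> D_verts V E (Suc k)" "T \<in> D_verts V E (Suc k)"
    using S T unfolding X_verts_def D_verts_def by auto
  moreover have "(\<lambda>A B. A \<in> D_verts V E (Suc k) \<and> B \<in> D_verts V E (Suc k) \<and> D_adj A B)\<^sup>*\<^sup>* S T"
    using assms(3) SD unfolding connected_graph_def by simp
  moreover have "S \<in> representatives V E k S" "T \<in> representatives V E k T"
    using S T unfolding representatives_def X_verts_def by auto
  ultimately show "X_path V E k S T" using representatives_along_D_path by blast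
qed

end
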